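(* Let $n_{y'}$ be the number of occurrences of $y'$ among $y_1,\dots,y_l$, and define \[ e_{y'}:=\frac{1}{Y-1}\Bigl(\frac{l+Y\alpha}{n_{y'}+\alpha}-1\Bigr),\qquad y'\in\mathbf{Y}. \] Then $(e_{y'})$ is an e-variable valid under the Bayesian model, and it is the unique solution of \[ \mathbb{E}\sum_{y'\in\mathbf{Y}\setminus\{y\}}\ln e_{y'}\to\max \] over all e-variables valid under the Bayesian model. Here the expectation is over $y_1,\dots,y_l,y$ generated from the Bayesian model.
   Context: Bayesian model: the label space is $\mathbf{Y}=\{1,\dots,Y\}$ with $Y\ge2$. The parameter $\theta$ lies in the simplex $\Theta=\{\theta\in[0,1]^Y:\sum_y\theta_y=1\}$ and is drawn from $\mathrm{Dir}(\alpha,\dots,\alpha)$ with $\alpha>0$. Given $\theta$, the observations $y_1,\dots,y_l,y$ are i.i.d. with $\Pr(y_i=u)=\theta_u$. The first $l$ observations form the training set; $y$ is the test observation. An e-variable is a family of nonnegative values $e_{y'}=f(y_1,\dots,y_l,y')$, $y'\in\mathbf{Y}$, for some function $f$. It is valid under the Bayesian model if $\mathbb{E}\,f(y_1,\dots,y_l,y)\le1$, where $y$ is the actual test observation. The convention $\ln 0=-\infty$ is used. *)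

theory Defs
  imports "HOL-Analysis.Analysis"
begin

definition labels :: "nat \<Rightarrow> nat set" where
  "labels Y = {1..Y}"

definition seqs :: "nat \<Rightarrow> nat \<Rightarrow> nat list set" where
  "seqs Y l = {ys. length ys = l \<and> set ys \<subseteq> labels Y}"

text \<open>Coordinates of the simplex: (theta_1,...,theta_{Y-1}); theta_Y = 1 - sum of the others.\<close>

definition theta_of :: "nat \<Rightarrow> (nat \<Rightarrow> real) \<Rightarrow> (nat \<Rightarrow> real)" where
  "theta_of Y x = restrict (\<lambda>u. if u = Y then 1 - (\<Sum>v\<in>{1..<Y}. x v) else x u) {1..Y}"

definition simplex_coords :: "nat \<Rightarrow> (nat \<Rightarrow> real) set" where
  "simplex_coords Y = {x. (\<forall>v\<in>{1..<Y}. 0 \<le> x v) \<and> (\<Sum>v\<in>{1..<Y}. x v) \<le> 1}"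

text \<open>Lebesgue density of the symmetric Dirichlet distribution Dir(alpha,...,alpha)
  in the coordinates (theta_1,...,theta_{Y-1}).\<close>

definition dir_density :: "nat \<Rightarrow> real \<Rightarrow> (nat \<Rightarrow> real) \<Rightarrow> real" where
  "dir_density Y \<alpha> x =
     indicator (simplex_coords Y) x * (Gamma (real Y * \<alpha>) / Gamma \<alpha> ^ Y) *
     (\<Prod>u\<in>{1..Y}. theta_of Y x u powr (\<alpha> - 1))"

definition dirichlet :: "nat \<Rightarrow> real \<Rightarrow> (nat \<Rightarrow> real) measure" where
  "dirichlet Y \<alpha> =
     distr (density (PiM {1..<Y} (\<lambda>_. lborel)) (\<lambda>x. ennreal (dir_density Y \<alpha> x)))
           (PiM {1..Y} (\<lambda>_. lborel)) (theta_of Y)"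

text \<open>Marginal probability, under the Bayesian model, that the observations are exactly
  the sequence s (theta drawn from the Dirichlet prior, then i.i.d. observations).\<close>

definition seq_prob :: "nat \<Rightarrow> real \<Rightarrow> nat list \<Rightarrow> real" where
  "seq_prob Y \<alpha> s = (\<integral>\<theta>. (\<Prod>i<length s. \<theta> (s ! i)) \<partial>dirichlet Y \<alpha>)"

definition bayes_expect :: "nat \<Rightarrow> real \<Rightarrow> nat \<Rightarrow> (nat list \<Rightarrow> nat \<Rightarrow> real) \<Rightarrow> real" where
  "bayes_expect Y \<alpha> l g =
     (\<Sum>ys\<in>seqs Y l. \<Sum>y\<in>labels Y. seq_prob Y \<alpha> (ys @ [y]) * g ys y)"

definition bayes_expect_ereal :: "nat \<Rightarrow> real \<Rightarrow> nat \<Rightarrow> (nat list \<Rightarrow> nat \<Rightarrow> ereal) \<Rightarrow> ereal" where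
  "bayes_expect_ereal Y \<alpha> l g =
     (\<Sum>ys\<in>seqs Y l. \<Sum>y\<in>labels Y. ereal (seq_prob Y \<alpha> (ys @ [y])) * g ys y)"

text \<open>An e-variable is given by a function f with e_{y'} = f (y_1...y_l) y'.\<close>

definition valid_evar :: "nat \<Rightarrow> real \<Rightarrow> nat \<Rightarrow> (nat list \<Rightarrow> nat \<Rightarrow> real) \<Rightarrow> bool" where
  "valid_evar Y \<alpha> l f \<longleftrightarrow>
     (\<forall>ys\<in>seqs Y l. \<forall>y'\<in>labels Y. 0 \<le> f ys y') \<and> bayes_expect Y \<alpha> l f \<le> 1"

definition lnE :: "real \<Rightarrow> ereal" where
  "lnE x = (if x > 0 then ereal (ln x) else -\<infinity>)"

definition objective :: "nat \<Rightarrow> real \<Rightarrow> nat \<Rightarrow> (nat list \<Rightarrow> nat \<Rightarrow> real) \<Rightarrow> ereal" where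
  "objective Y \<alpha> l f =
     bayes_expect_ereal Y \<alpha> l (\<lambda>ys y. \<Sum>y'\<in>labels Y - {y}. lnE (f ys y'))"

definition e_opt :: "nat \<Rightarrow> real \<Rightarrow> nat list \<Rightarrow> nat \<Rightarrow> real" where
  "e_opt Y \<alpha> ys y' =
     1 / (real Y - 1) * ((real (length ys) + real Y * \<alpha>) / (real (count_list ys y') + \<alpha>) - 1)"

end

(* Given the training sequence, the Dirichlet prior makes the test label y' appear with the
   predictive probability p y' = (n y' + alpha) / (l + Y alpha), and e_opt y' is the odds
   (1 - p y') / p y' scaled by 1 / (Y - 1).  Exchanging the order of summation gives
   E (sum over y' <> y of g y') = E ((1 - p y) / p y * g y) = (Y - 1) E (e_opt y * g y);
   with g = 1 this is E e_opt = 1.  For a valid f, concavity of ln bounds ln (f y') by the tangent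
   ln (e_opt y') + (f y' - e_opt y') / e_opt y', and the same identity turns the expected linear
   part into (Y - 1) (E f - 1) <= 0.  Every sequence has positive probability, so equality forces
   f = e_opt. *)

theory Submission
  imports Defs
begin

lemma Beta_real_nonneg: "a > 0 \<Longrightarrow> b > 0 \<Longrightarrow> Beta a b \<ge> (0::real)"
  by (simp add: Beta_def)

lemma nn_integral_Beta_scaled:
  assumes "p > 0" "q > 0" "w \<ge> 0"
  shows "(\<integral>\<^sup>+t. ennreal (if 0 \<le> t \<and> t \<le> w then t powr (p - 1) * (w - t) powr (q - 1) else 0) \<partial>lborel)
    = ennreal (w powr (p + q - 1) * Beta p q)"
proof (cases "w = 0")
  case True
  then have "\<And>t. (if 0 \<le> t \<and> t \<le> w then t powr (p - 1) * (w - t) powr (q - 1) else 0) = 0"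
    by auto
  then show ?thesis using True by simp
next
  case False
  with assms have w: "w > 0" by simp
  have Beta: "(\<integral>\<^sup>+v. ennreal (v powr (p - 1) * (1 - v) powr (q - 1)) * indicator {0..1} v \<partial>lborel)
      = ennreal (Beta p q)"
    by (rule nn_integral_has_integral_lebesgue'[OF _ has_integral_Beta_real[OF assms(1,2)]]) auto
  have "(\<integral>\<^sup>+t. ennreal (if 0 \<le> t \<and> t \<le> w then t powr (p - 1) * (w - t) powr (q - 1) else 0) \<partial>lborel)
      = ennreal \<bar>w\<bar> * (\<integral>\<^sup>+v. ennreal (if 0 \<le> 0 + w * v \<and> 0 + w * v \<le> w
          then (0 + w * v) powr (p - 1) * (w - (0 + w * v)) powr (q - 1) else 0) \<partial>lborel)"
    by (rule nn_integral_real_affine) (use w in auto)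
  also have "\<dots> = ennreal w * (\<integral>\<^sup>+v. ennreal (w powr (p - 1) * w powr (q - 1)) *
      (ennreal (v powr (p - 1) * (1 - v) powr (q - 1)) * indicator {0..1} v) \<partial>lborel)"
  proof -
    have "ennreal (if 0 \<le> 0 + w * v \<and> 0 + w * v \<le> w
          then (0 + w * v) powr (p - 1) * (w - (0 + w * v)) powr (q - 1) else 0)
        = ennreal (w powr (p - 1) * w powr (q - 1)) *
          (ennreal (v powr (p - 1) * (1 - v) powr (q - 1)) * indicator {0..1} v)" for v
    proof -
      have "(0 \<le> w * v \<and> w * v \<le> w) = (0 \<le> v \<and> v \<le> 1)"
        using w by (simp add: zero_le_mult_iff mult_le_cancel_left1)
      moreover have "w - w * v = w * (1 - v)"
        by (simp add: algebra_simps)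
      ultimately show ?thesis
        using w by (auto simp: powr_mult ennreal_mult'[symmetric] mult_ac indicator_def)
    qed
    then show ?thesis
      using w by (simp only: abs_of_pos)
  qed
  also have "\<dots> = ennreal (w * (w powr (p - 1) * w powr (q - 1)) * Beta p q)"
    using w assms Beta_real_nonneg[of p q]
    by (simp add: nn_integral_cmult Beta mult.assoc flip: ennreal_mult)
  also have "w * (w powr (p - 1) * w powr (q - 1)) = w powr (p + q - 1)"
    using w by (simp add: powr_add[symmetric] powr_mult_base)
  finally show ?thesis .
qed

lemma prod_nth_eq_prod_power_count_list:
  fixes f :: "'a \<Rightarrow> 'b::comm_monoid_mult"
  assumes "finite A" "set s \<subseteq> A"
  shows "(\<Prod>i<length s. f (s ! i)) = (\<Prod>u\<in>A. f u ^ count_list s u)"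
  using assms(2)
proof (induction s)
  case Nil
  then show ?case by simp
next
  case (Cons a s)
  have "f u ^ count_list (a # s) u = (if u = a then f u else 1) * f u ^ count_list s u" for u
    by simp
  then have "(\<Prod>u\<in>A. f u ^ count_list (a # s) u) = f a * (\<Prod>u\<in>A. f u ^ count_list s u)"
    using Cons.prems assms(1) by (simp add: prod.distrib)
  with Cons show ?case
    unfolding length_Cons prod.lessThan_Suc_shift by simp
qed

lemma sum_count_list:
  assumes "finite A" "set s \<subseteq> A"
  shows "(\<Sum>u\<in>A. count_list s u) = length s"
  using sum_list_map_eq_sum_count2[OF assms(2,1), of "\<lambda>_. 1"] by (simp add: sum_list_triv)

definition ln_tangent :: "real \<Rightarrow> real \<Rightarrow> real" where
  "ln_tangent c x = ln c + (x - c) / c"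

lemma lnE_le_ln_tangent:
  assumes "x \<ge> 0" "c > 0"
  shows "lnE x \<le> ereal (ln_tangent c x)"
  using assms ln_diff_le[of x c] by (auto simp: lnE_def ln_tangent_def)

lemma lnE_less_ln_tangent:
  assumes "x \<ge> 0" "c > 0" "x \<noteq> c"
  shows "lnE x < ereal (ln_tangent c x)"
proof (cases "x > 0")
  case True
  have "ln (x / c) \<noteq> x / c - 1"
    using assms True ln_eq_minus_one[of "x / c"] by auto
  then have "ln x - ln c < (x - c) / c"
    using assms True ln_le_minus_one[of "x / c"] by (simp add: ln_div diff_divide_distrib)
  then show ?thesis
    using True by (simp add: lnE_def ln_tangent_def)
qed (simp add: lnE_def)

lemma sum_less_sum_ereal:
  fixes f :: "'a \<Rightarrow> ereal"
  assumes "finite A" "\<And>a. a \<in> A \<Longrightarrow> f a \<le> ereal (g a)" "a \<in> A" "f a < ereal (g a)"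
  shows "sum f A < ereal (sum g A)"
proof -
  have "sum f (A - {a}) \<le> ereal (sum g (A - {a}))"
    using assms(2) sum_mono[of "A - {a}" f "\<lambda>a. ereal (g a)"] by simp
  with assms(4) have "f a + sum f (A - {a}) < ereal (g a) + ereal (sum g (A - {a}))"
    by (cases "f a"; cases "sum f (A - {a})") auto
  then show ?thesis
    using assms(1,3) by (simp add: sum.remove)
qed

lemma ereal_mult_le_ereal:
  assumes "p \<ge> 0" "x \<le> ereal y"
  shows "ereal p * x \<le> ereal (p * y)"
  using ereal_mult_left_mono[OF assms(2), of "ereal p"] assms(1) by simp

lemma ereal_mult_less_ereal:
  assumes "p > 0" "x < ereal y"
  shows "ereal p * x < ereal (p * y)"
  using ereal_mult_strict_left_mono[OF assms(2), of "ereal p"] assms(1) by simp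

lemma sum_lnE_le_ln_tangent:
  assumes "\<And>b. b \<in> B \<Longrightarrow> f b \<ge> 0" "\<And>b. b \<in> B \<Longrightarrow> c b > 0"
  shows "(\<Sum>b\<in>B. lnE (f b)) \<le> ereal (\<Sum>b\<in>B. ln_tangent (c b) (f b))"
  using sum_mono[of B "\<lambda>b. lnE (f b)" "\<lambda>b. ereal (ln_tangent (c b) (f b))"] assms lnE_le_ln_tangent
  by simp

lemma sum_lnE_less_ln_tangent:
  assumes "finite B" "\<And>b. b \<in> B \<Longrightarrow> f b \<ge> 0" "\<And>b. b \<in> B \<Longrightarrow> c b > 0"
    and "b \<in> B" "f b \<noteq> c b"
  shows "(\<Sum>b\<in>B. lnE (f b)) < ereal (\<Sum>b\<in>B. ln_tangent (c b) (f b))"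
  using assms by (intro sum_less_sum_ereal lnE_le_ln_tangent lnE_less_ln_tangent) auto

section \<open>Dirichlet integrals\<close>

text \<open>Unnormalised Dirichlet density in the coordinates x 1, ..., x (k - 1) of the simplex; the
  parameter b belongs to the implicit last coordinate 1 - (x 1 + ... + x (k - 1)).\<close>

definition dirichlet_kernel :: "nat \<Rightarrow> (nat \<Rightarrow> real) \<Rightarrow> real \<Rightarrow> (nat \<Rightarrow> real) \<Rightarrow> real" where
  "dirichlet_kernel k a b x =
     (if x \<in> simplex_coords k
      then (\<Prod>v\<in>{1..<k}. x v powr (a v - 1)) * (1 - (\<Sum>v\<in>{1..<k}. x v)) powr (b - 1) else 0)"

lemma borel_measurable_dirichlet_kernel [measurable]:
  "dirichlet_kernel k a b \<in> borel_measurable (PiM {1..<k} (\<lambda>_. lborel))"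
  unfolding dirichlet_kernel_def simplex_coords_def by measurable

lemma dirichlet_kernel_nonneg: "dirichlet_kernel k a b x \<ge> 0"
  unfolding dirichlet_kernel_def by (auto intro!: mult_nonneg_nonneg prod_nonneg)

lemma dirichlet_kernel_fun_upd:
  assumes "k > 0"
  shows "dirichlet_kernel (Suc k) a b (x(k := y)) =
    (if x \<in> simplex_coords k then \<Prod>v\<in>{1..<k}. x v powr (a v - 1) else 0) *
    (if 0 \<le> y \<and> y \<le> 1 - (\<Sum>v\<in>{1..<k}. x v)
     then y powr (a k - 1) * (1 - (\<Sum>v\<in>{1..<k}. x v) - y) powr (b - 1) else 0)"
proof -
  have insert: "{1..<Suc k} = insert k {1..<k}"
    using assms by auto
  have "(\<Sum>v\<in>{1..<k}. (x(k := y)) v) = (\<Sum>v\<in>{1..<k}. x v)"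
    and "(\<Prod>v\<in>{1..<k}. (x(k := y)) v powr (a v - 1)) = (\<Prod>v\<in>{1..<k}. x v powr (a v - 1))"
    and "(\<forall>v\<in>{1..<k}. 0 \<le> (x(k := y)) v) \<longleftrightarrow> (\<forall>v\<in>{1..<k}. 0 \<le> x v)"
    by (auto intro!: sum.cong prod.cong)
  then show ?thesis
    unfolding dirichlet_kernel_def simplex_coords_def insert
    by (auto simp del: fun_upd_apply simp: algebra_simps fun_upd_same)
qed

lemma nn_integral_dirichlet_kernel_fun_upd:
  assumes "k > 0" "a k > 0" "b > 0"
  shows "(\<integral>\<^sup>+y. dirichlet_kernel (Suc k) a b (x(k := y)) \<partial>lborel)
    = ennreal (dirichlet_kernel k a (a k + b) x * Beta (a k) b)"
proof -
  define s where "s = (\<Sum>v\<in>{1..<k}. x v)"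
  define P where "P = (if x \<in> simplex_coords k then \<Prod>v\<in>{1..<k}. x v powr (a v - 1) else 0)"
  have "P \<ge> 0"
    unfolding P_def by (auto intro: prod_nonneg)
  then have "(\<integral>\<^sup>+y. dirichlet_kernel (Suc k) a b (x(k := y)) \<partial>lborel)
      = ennreal P * (\<integral>\<^sup>+y. ennreal (if 0 \<le> y \<and> y \<le> 1 - s
          then y powr (a k - 1) * (1 - s - y) powr (b - 1) else 0) \<partial>lborel)"
    unfolding dirichlet_kernel_fun_upd[OF assms(1)] s_def[symmetric] P_def[symmetric]
    by (subst nn_integral_cmult[symmetric]) (auto intro!: nn_integral_cong simp: ennreal_mult')
  also have "\<dots> = ennreal (dirichlet_kernel k a (a k + b) x * Beta (a k) b)"
  proof (cases "x \<in> simplex_coords k")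
    case True
    then have "1 - s \<ge> 0"
      by (simp add: simplex_coords_def s_def)
    moreover have "Beta (a k) b \<ge> 0"
      using assms by (simp add: Beta_real_nonneg)
    moreover have "dirichlet_kernel k a (a k + b) x = P * (1 - s) powr (a k + b - 1)"
      using True by (simp add: dirichlet_kernel_def P_def s_def)
    ultimately show ?thesis
      using \<open>P \<ge> 0\<close> assms by (simp add: nn_integral_Beta_scaled ennreal_mult'[symmetric] mult_ac)
  next
    case False
    then show ?thesis
      by (simp add: dirichlet_kernel_def P_def)
  qed
  finally show ?thesis .
qed

lemma nn_integral_dirichlet_kernel_Suc:
  assumes "k > 0" "a k > 0" "b > 0"
  shows "(\<integral>\<^sup>+x. dirichlet_kernel (Suc k) a b x \<partial>PiM {1..<Suc k} (\<lambda>_. lborel))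
    = (\<integral>\<^sup>+x. dirichlet_kernel k a (a k + b) x \<partial>PiM {1..<k} (\<lambda>_. lborel)) * Beta (a k) b"
proof -
  let ?M = "PiM {1..<k} (\<lambda>_. lborel) :: (nat \<Rightarrow> real) measure"
  have insert: "{1..<Suc k} = insert k {1..<k}"
    using assms(1) by auto
  have "(\<lambda>x. ennreal (dirichlet_kernel (Suc k) a b x))
      \<in> borel_measurable (PiM (insert k {1..<k}) (\<lambda>_. lborel))"
    unfolding insert[symmetric] by measurable
  then have "(\<integral>\<^sup>+x. dirichlet_kernel (Suc k) a b x \<partial>PiM {1..<Suc k} (\<lambda>_. lborel))
      = (\<integral>\<^sup>+x. \<integral>\<^sup>+y. dirichlet_kernel (Suc k) a b (x(k := y)) \<partial>lborel \<partial>?M)"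
    unfolding insert
    by (intro product_sigma_finite.product_nn_integral_insert)
      (auto simp: product_sigma_finite_def lborel.sigma_finite_measure_axioms)
  also have "\<dots> = (\<integral>\<^sup>+x. ennreal (dirichlet_kernel k a (a k + b) x) * Beta (a k) b \<partial>?M)"
    using assms Beta_real_nonneg[of "a k" b]
    by (simp add: nn_integral_dirichlet_kernel_fun_upd ennreal_mult' dirichlet_kernel_nonneg)
  also have "\<dots> = (\<integral>\<^sup>+x. dirichlet_kernel k a (a k + b) x \<partial>?M) * Beta (a k) b"
    by (rule nn_integral_multc) measurable
  finally show ?thesis .
qed

lemma nn_integral_dirichlet_kernel:
  assumes "\<forall>v\<in>{1..<k}. a v > 0" "b > 0"
  shows "(\<integral>\<^sup>+x. dirichlet_kernel k a b x \<partial>PiM {1..<k} (\<lambda>_. lborel))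
    = ennreal ((\<Prod>v\<in>{1..<k}. Gamma (a v)) * Gamma b / Gamma ((\<Sum>v\<in>{1..<k}. a v) + b))"
  using assms
proof (induction k arbitrary: b)
  case 0
  then show ?case
    by (simp add: PiM_empty nn_integral_count_space_finite dirichlet_kernel_def simplex_coords_def
      less_imp_neq[OF Gamma_real_pos, symmetric])
next
  case (Suc k)
  show ?case
  proof (cases "k = 0")
    case True
    then show ?thesis
      using Suc.IH[OF _ Suc.prems(2)] by (simp add: dirichlet_kernel_def simplex_coords_def)
  next
    case False
    define G where "G = (\<Prod>v\<in>{1..<k}. Gamma (a v))"
    define S where "S = (\<Sum>v\<in>{1..<k}. a v)"
    have insert: "{1..<Suc k} = insert k {1..<k}"
      using False by auto
    have "k > 0" and a: "\<forall>v\<in>{1..<k}. a v > 0" "a k > 0"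
      using Suc.prems(1) False by auto
    then have "a k + b > 0"
      using Suc.prems(2) by simp
    have "G \<ge> 0" "S \<ge> 0"
      unfolding G_def S_def using a(1) by (auto intro!: prod_nonneg sum_nonneg simp: less_imp_le)
    have "Gamma (a k + b) > 0" "Beta (a k) b \<ge> 0"
      using a Suc.prems(2) by (simp_all add: Beta_real_nonneg)
    have "(\<integral>\<^sup>+x. dirichlet_kernel (Suc k) a b x \<partial>PiM {1..<Suc k} (\<lambda>_. lborel))
        = ennreal (G * Gamma (a k + b) / Gamma (S + (a k + b))) * Beta (a k) b"
      unfolding nn_integral_dirichlet_kernel_Suc[of k a, OF \<open>k > 0\<close> a(2) Suc.prems(2)] Suc.IH[OF a(1) \<open>a k + b > 0\<close>]
      by (simp add: G_def S_def)
    also have "\<dots> = ennreal (Gamma (a k) * G * Gamma b / Gamma (a k + S + b))"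
      using \<open>G \<ge> 0\<close> \<open>S \<ge> 0\<close> \<open>Beta (a k) b \<ge> 0\<close> \<open>Gamma (a k + b) > 0\<close>
      by (simp add: ennreal_mult'[symmetric] Beta_def field_simps)
    finally show ?thesis
      unfolding insert G_def S_def by simp
  qed
qed

lemma integral_dirichlet_kernel:
  assumes "\<forall>v\<in>{1..<k}. a v > 0" "b > 0"
  shows "(\<integral>x. dirichlet_kernel k a b x \<partial>PiM {1..<k} (\<lambda>_. lborel))
    = (\<Prod>v\<in>{1..<k}. Gamma (a v)) * Gamma b / Gamma ((\<Sum>v\<in>{1..<k}. a v) + b)"
proof -
  have "(\<Sum>v\<in>{1..<k}. a v) \<ge> 0"
    using assms(1) by (intro sum_nonneg) (simp add: less_imp_le)
  then have "(\<Prod>v\<in>{1..<k}. Gamma (a v)) * Gamma b / Gamma ((\<Sum>v\<in>{1..<k}. a v) + b) > 0"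
    using assms by (intro divide_pos_pos mult_pos_pos prod_pos Gamma_real_pos) auto
  moreover have "(\<integral>x. dirichlet_kernel k a b x \<partial>PiM {1..<k} (\<lambda>_. lborel))
      = enn2real (\<integral>\<^sup>+x. dirichlet_kernel k a b x \<partial>PiM {1..<k} (\<lambda>_. lborel))"
    by (rule integral_eq_nn_integral) (measurable, simp add: dirichlet_kernel_nonneg)
  ultimately show ?thesis
    unfolding nn_integral_dirichlet_kernel[OF assms] by simp
qed

section \<open>The marginal law of the observations\<close>

lemma dir_density_mult_prod_nth:
  assumes "Y \<ge> 1" "set s \<subseteq> labels Y"
  shows "dir_density Y \<alpha> x * (\<Prod>i<length s. theta_of Y x (s ! i))
    = Gamma (real Y * \<alpha>) / Gamma \<alpha> ^ Y *
      dirichlet_kernel Y (\<lambda>u. real (count_list s u) + \<alpha>) (real (count_list s Y) + \<alpha>) x"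
proof (cases "x \<in> simplex_coords Y")
  case True
  define S where "S = (\<Sum>v\<in>{1..<Y}. x v)"
  have theta: "theta_of Y x u = (if u = Y then 1 - S else x u)" if "u \<in> {1..Y}" for u
    using that by (simp add: theta_of_def S_def)
  have "theta_of Y x u \<ge> 0" if "u \<in> {1..Y}" for u
    using True that by (auto simp: theta simplex_coords_def S_def)
  moreover have "t ^ n * t powr (\<alpha> - 1) = t powr (real n + \<alpha> - 1)" if "t \<ge> 0" for t :: real and n
    using that by (cases "t = 0") (simp_all add: powr_realpow[symmetric] powr_add[symmetric] add_diff_eq)
  ultimately have "(\<Prod>i<length s. theta_of Y x (s ! i)) * (\<Prod>u\<in>{1..Y}. theta_of Y x u powr (\<alpha> - 1))
      = (\<Prod>u\<in>{1..Y}. theta_of Y x u powr (real (count_list s u) + \<alpha> - 1))"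
    using assms(2) unfolding labels_def
    by (simp add: prod_nth_eq_prod_power_count_list[of "{1..Y}"] prod.distrib[symmetric])
  also have "\<dots> = (\<Prod>u\<in>{1..<Y}. x u powr (real (count_list s u) + \<alpha> - 1)) *
      (1 - S) powr (real (count_list s Y) + \<alpha> - 1)"
  proof -
    have "{1..Y} = insert Y {1..<Y}"
      using assms(1) by auto
    moreover have "(\<Prod>u\<in>{1..<Y}. theta_of Y x u powr (real (count_list s u) + \<alpha> - 1))
        = (\<Prod>u\<in>{1..<Y}. x u powr (real (count_list s u) + \<alpha> - 1))"
      by (intro prod.cong) (auto simp: theta)
    ultimately show ?thesis
      using assms(1) by (simp add: theta)
  qed
  finally show ?thesis
    using True by (simp add: dir_density_def dirichlet_kernel_def S_def mult_ac)
next
  case False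
  then show ?thesis
    by (simp add: dir_density_def dirichlet_kernel_def)
qed

lemma measurable_theta_of:
  "theta_of Y \<in> PiM {1..<Y} (\<lambda>_. lborel) \<rightarrow>\<^sub>M PiM {1..Y} (\<lambda>_. lborel :: real measure)"
  unfolding theta_of_def
proof (rule measurable_restrict)
  fix u assume "u \<in> {1..Y}"
  then have "u \<noteq> Y \<Longrightarrow> (\<lambda>x. x u) \<in> PiM {1..<Y} (\<lambda>_. lborel) \<rightarrow>\<^sub>M lborel"
    by (simp add: measurable_component_singleton)
  then show "(\<lambda>x. if u = Y then 1 - (\<Sum>v\<in>{1..<Y}. x v) else x u :: real)
      \<in> PiM {1..<Y} (\<lambda>_. lborel) \<rightarrow>\<^sub>M lborel"
    by (cases "u = Y") simp_all
qed

lemma seq_prob_eq_integral_dirichlet_kernel: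
  assumes "Y \<ge> 1" "\<alpha> > 0" "set s \<subseteq> labels Y"
  shows "seq_prob Y \<alpha> s = Gamma (real Y * \<alpha>) / Gamma \<alpha> ^ Y *
    (\<integral>x. dirichlet_kernel Y (\<lambda>u. real (count_list s u) + \<alpha>) (real (count_list s Y) + \<alpha>) x
      \<partial>PiM {1..<Y} (\<lambda>_. lborel))"
proof -
  let ?M = "PiM {1..<Y} (\<lambda>_. lborel) :: (nat \<Rightarrow> real) measure"
  define C where "C = Gamma (real Y * \<alpha>) / Gamma \<alpha> ^ Y"
  have "C > 0"
    using assms by (simp add: C_def)
  have dir_density: "dir_density Y \<alpha> = (\<lambda>x. C * dirichlet_kernel Y (\<lambda>_. \<alpha>) \<alpha> x)"
    using dir_density_mult_prod_nth[OF assms(1), of "[]"] by (simp add: C_def fun_eq_iff)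
  have component: "(\<lambda>\<theta>. \<theta> (s ! i) :: real) \<in> borel_measurable (PiM {1..Y} (\<lambda>_. lborel))"
    if "i < length s" for i
    using assms(3) nth_mem[OF that] measurable_component_singleton[of "s ! i" "{1..Y}" "\<lambda>_. lborel"]
    by (auto simp: labels_def)
  have prod_measurable: "(\<lambda>\<theta>. \<Prod>i<length s. \<theta> (s ! i) :: real) \<in> borel_measurable (PiM {1..Y} (\<lambda>_. lborel))"
    by (rule borel_measurable_prod) (rule component, simp)
  have "seq_prob Y \<alpha> s
      = (\<integral>x. (\<Prod>i<length s. theta_of Y x (s ! i)) \<partial>density ?M (\<lambda>x. dir_density Y \<alpha> x))"
    unfolding seq_prob_def dirichlet_def
    by (rule integral_distr[OF _ prod_measurable]) (simp only: measurable_density_eq1 measurable_theta_of)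
  also have "\<dots> = (\<integral>x. dir_density Y \<alpha> x *\<^sub>R (\<Prod>i<length s. theta_of Y x (s ! i)) \<partial>?M)"
  proof (rule integral_density)
    show "(\<lambda>x. \<Prod>i<length s. theta_of Y x (s ! i)) \<in> borel_measurable ?M"
      using measurable_comp[OF measurable_theta_of prod_measurable] by (simp add: comp_def)
    show "dir_density Y \<alpha> \<in> borel_measurable ?M"
      unfolding dir_density by measurable
    show "AE x in ?M. 0 \<le> dir_density Y \<alpha> x"
      using \<open>C > 0\<close> by (simp add: dir_density dirichlet_kernel_nonneg)
  qed
  finally show ?thesis
    by (simp add: dir_density_mult_prod_nth[OF assms(1,3)] flip: C_def)
qed

lemma seq_prob_closed_form:
  assumes "Y \<ge> 1" "\<alpha> > 0" "set s \<subseteq> labels Y"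
  shows "seq_prob Y \<alpha> s = Gamma (real Y * \<alpha>) / Gamma \<alpha> ^ Y *
    (\<Prod>u\<in>labels Y. Gamma (real (count_list s u) + \<alpha>)) / Gamma (real (length s) + real Y * \<alpha>)"
proof -
  define a where "a u = real (count_list s u) + \<alpha>" for u
  have labels: "labels Y = insert Y {1..<Y}"
    using assms(1) by (auto simp: labels_def)
  have "(\<Sum>v\<in>{1..<Y}. a v) + a Y = (\<Sum>u\<in>labels Y. a u)"
    by (simp add: labels)
  also have "\<dots> = real (length s) + real Y * \<alpha>"
    using assms(3) by (simp add: a_def sum.distrib sum_count_list labels_def flip: of_nat_sum)
  finally have "(\<Sum>v\<in>{1..<Y}. a v) + a Y = real (length s) + real Y * \<alpha>" .
  moreover have "\<forall>v\<in>{1..<Y}. a v > 0" "a Y > 0"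
    using assms(2) by (simp_all add: a_def add_nonneg_pos)
  ultimately show ?thesis
    unfolding seq_prob_eq_integral_dirichlet_kernel[OF assms] a_def[symmetric, abs_def]
      integral_dirichlet_kernel[OF \<open>\<forall>v\<in>{1..<Y}. a v > 0\<close> \<open>a Y > 0\<close>]
    by (simp add: labels mult_ac)
qed

definition predictive :: "nat \<Rightarrow> real \<Rightarrow> nat list \<Rightarrow> nat \<Rightarrow> real" where
  "predictive Y \<alpha> s y = (real (count_list s y) + \<alpha>) / (real (length s) + real Y * \<alpha>)"

lemma seq_prob_pos:
  assumes "Y \<ge> 1" "\<alpha> > 0" "set s \<subseteq> labels Y"
  shows "seq_prob Y \<alpha> s > 0"
  using assms by (simp add: seq_prob_closed_form prod_pos add_nonneg_pos)

lemma seq_prob_Nil: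
  assumes "Y \<ge> 1" "\<alpha> > 0"
  shows "seq_prob Y \<alpha> [] = 1"
proof -
  have "Gamma \<alpha> \<noteq> 0" "Gamma (real Y * \<alpha>) \<noteq> 0"
    using assms by (auto intro!: Gamma_real_pos[THEN less_imp_neq, symmetric])
  then show ?thesis
    using assms by (simp add: seq_prob_closed_form labels_def)
qed

lemma seq_prob_snoc:
  assumes "Y \<ge> 1" "\<alpha> > 0" "set s \<subseteq> labels Y" "y \<in> labels Y"
  shows "seq_prob Y \<alpha> (s @ [y]) = seq_prob Y \<alpha> s * predictive Y \<alpha> s y"
proof -
  have Gamma_plus1: "Gamma (x + 1) = x * Gamma x" if "x > 0" for x :: real
    using that by (intro Gamma_plus1) auto
  define c where "c = real (count_list s y) + \<alpha>"
  define L where "L = real (length s) + real Y * \<alpha>"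
  have "c > 0" "L > 0"
    using assms(1,2) by (simp_all add: c_def L_def add_nonneg_pos)
  have "(\<Prod>u\<in>labels Y. Gamma (real (count_list (s @ [y]) u) + \<alpha>))
      = Gamma (real (count_list (s @ [y]) y) + \<alpha>) *
        (\<Prod>u\<in>labels Y - {y}. Gamma (real (count_list (s @ [y]) u) + \<alpha>))"
    using assms(4) by (intro prod.remove) (simp_all add: labels_def)
  also have "\<dots> = Gamma (c + 1) * (\<Prod>u\<in>labels Y - {y}. Gamma (real (count_list s u) + \<alpha>))"
    by (auto simp: c_def add_ac intro!: prod.cong)
  also have "\<dots> = c * (\<Prod>u\<in>labels Y. Gamma (real (count_list s u) + \<alpha>))"
    using assms(4) \<open>c > 0\<close> by (simp add: Gamma_plus1 prod.remove[of _ y] c_def labels_def)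
  finally show ?thesis
    using assms \<open>L > 0\<close> Gamma_plus1[OF \<open>L > 0\<close>]
    by (simp add: seq_prob_closed_form predictive_def c_def L_def add_ac mult_ac)
qed

lemma sum_predictive:
  assumes "Y \<ge> 1" "\<alpha> > 0" "set s \<subseteq> labels Y"
  shows "(\<Sum>y\<in>labels Y. predictive Y \<alpha> s y) = 1"
proof -
  have "(\<Sum>y\<in>labels Y. real (count_list s y) + \<alpha>) = real (length s) + real Y * \<alpha>"
    using assms(3) by (simp add: sum.distrib sum_count_list labels_def flip: of_nat_sum)
  moreover have "real (length s) + real Y * \<alpha> > 0"
    using assms by (simp add: add_nonneg_pos)
  ultimately show ?thesis
    by (simp add: predictive_def flip: sum_divide_distrib)
qed

lemma sum_seq_prob_snoc:
  assumes "Y \<ge> 1" "\<alpha> > 0" "set s \<subseteq> labels Y"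
  shows "(\<Sum>y\<in>labels Y. seq_prob Y \<alpha> (s @ [y])) = seq_prob Y \<alpha> s"
  using assms by (simp add: seq_prob_snoc sum_predictive flip: sum_distrib_left)

lemma finite_seqs: "finite (seqs Y l)"
  using finite_lists_length_eq[of "labels Y" l] by (simp add: seqs_def labels_def conj_commute)

lemma seqs_Suc: "seqs Y (Suc l) = (\<lambda>(s, y). s @ [y]) ` (seqs Y l \<times> labels Y)"
proof (intro equalityI subsetI)
  fix s assume s: "s \<in> seqs Y (Suc l)"
  then have "s \<noteq> []"
    by (auto simp: seqs_def)
  with s have "s = butlast s @ [last s]" "butlast s \<in> seqs Y l" "last s \<in> labels Y"
    by (auto simp: seqs_def dest: in_set_butlastD)
  then show "s \<in> (\<lambda>(s, y). s @ [y]) ` (seqs Y l \<times> labels Y)"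
    by (metis (no_types, lifting) SigmaI case_prod_conv image_eqI)
qed (auto simp: seqs_def)

lemma sum_seqs_Suc:
  "(\<Sum>s\<in>seqs Y (Suc l). g s) = (\<Sum>s\<in>seqs Y l. \<Sum>y\<in>labels Y. g (s @ [y]))"
proof -
  have "inj_on (\<lambda>(s, y). s @ [y]) (seqs Y l \<times> labels Y)"
    by (auto simp: inj_on_def)
  then show ?thesis
    by (simp add: seqs_Suc sum.reindex sum.cartesian_product case_prod_unfold)
qed

lemma sum_seq_prob:
  assumes "Y \<ge> 1" "\<alpha> > 0"
  shows "(\<Sum>s\<in>seqs Y l. seq_prob Y \<alpha> s) = 1"
proof (induction l)
  case 0
  have "seqs Y 0 = {[]}"
    by (auto simp: seqs_def)
  then show ?case
    using assms by (simp add: seq_prob_Nil)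
next
  case (Suc l)
  have "(\<Sum>s\<in>seqs Y (Suc l). seq_prob Y \<alpha> s) = (\<Sum>s\<in>seqs Y l. \<Sum>y\<in>labels Y. seq_prob Y \<alpha> (s @ [y]))"
    by (rule sum_seqs_Suc)
  also have "\<dots> = (\<Sum>s\<in>seqs Y l. seq_prob Y \<alpha> s)"
    using assms by (intro sum.cong) (simp_all add: sum_seq_prob_snoc seqs_def)
  finally show ?case
    using Suc by simp
qed

lemma bayes_expect_const:
  assumes "Y \<ge> 1" "\<alpha> > 0"
  shows "bayes_expect Y \<alpha> l (\<lambda>_ _. c) = c"
  using assms sum_seq_prob[OF assms, of l]
  by (simp add: bayes_expect_def sum_seq_prob_snoc seqs_def flip: sum_distrib_right)

lemma bayes_expect_add:
  "bayes_expect Y \<alpha> l (\<lambda>s y. g s y + h s y) = bayes_expect Y \<alpha> l g + bayes_expect Y \<alpha> l h"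
  by (simp add: bayes_expect_def distrib_left sum.distrib)

lemma bayes_expect_diff:
  "bayes_expect Y \<alpha> l (\<lambda>s y. g s y - h s y) = bayes_expect Y \<alpha> l g - bayes_expect Y \<alpha> l h"
  by (simp add: bayes_expect_def right_diff_distrib sum_subtractf)

lemma bayes_expect_cmult:
  "bayes_expect Y \<alpha> l (\<lambda>s y. c * g s y) = c * bayes_expect Y \<alpha> l g"
  by (simp add: bayes_expect_def sum_distrib_left mult_ac)

section \<open>Optimality of the e-variable\<close>

lemma e_opt_pos:
  assumes "Y \<ge> 2" "\<alpha> > 0"
  shows "e_opt Y \<alpha> s y > 0"
proof -
  have "real (count_list s y) + \<alpha> < real (length s) + real Y * \<alpha>"
    using assms count_le_length[of s y] by (simp add: add_le_less_mono)
  then show ?thesis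
    using assms by (simp add: e_opt_def add_nonneg_pos)
qed

lemma e_opt_mult_predictive:
  assumes "Y \<ge> 2" "\<alpha> > 0"
  shows "(real Y - 1) * e_opt Y \<alpha> s y * predictive Y \<alpha> s y = 1 - predictive Y \<alpha> s y"
proof -
  define c where "c = real (count_list s y) + \<alpha>"
  define L where "L = real (length s) + real Y * \<alpha>"
  have "c > 0" "L > 0"
    using assms by (simp_all add: c_def L_def add_nonneg_pos)
  have "(real Y - 1) * e_opt Y \<alpha> s y = L / c - 1"
    using assms(1) by (simp add: e_opt_def c_def L_def)
  moreover have "predictive Y \<alpha> s y = c / L"
    by (simp add: predictive_def c_def L_def)
  moreover have "(L / c - 1) * (c / L) = 1 - c / L"
    using \<open>c > 0\<close> \<open>L > 0\<close> by (simp add: field_simps)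
  ultimately show ?thesis
    by simp
qed

lemma bayes_expect_sum_others:
  assumes "Y \<ge> 2" "\<alpha> > 0"
  shows "bayes_expect Y \<alpha> l (\<lambda>s y. \<Sum>y'\<in>labels Y - {y}. g s y')
    = bayes_expect Y \<alpha> l (\<lambda>s y. (real Y - 1) * e_opt Y \<alpha> s y * g s y)"
  unfolding bayes_expect_def
proof (rule sum.cong[OF refl])
  fix s assume "s \<in> seqs Y l"
  then have s: "set s \<subseteq> labels Y"
    by (simp add: seqs_def)
  let ?P = "seq_prob Y \<alpha> s" and ?p = "predictive Y \<alpha> s"
  have "(\<Sum>y\<in>labels Y. seq_prob Y \<alpha> (s @ [y]) * (\<Sum>y'\<in>labels Y - {y}. g s y'))
      = (\<Sum>y\<in>labels Y. ?P * ?p y * ((\<Sum>y'\<in>labels Y. g s y') - g s y))"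
    using assms s by (intro sum.cong) (simp_all add: seq_prob_snoc sum_diff1 labels_def)
  also have "\<dots> = ?P * ((\<Sum>y\<in>labels Y. ?p y) * (\<Sum>y'\<in>labels Y. g s y') - (\<Sum>y\<in>labels Y. ?p y * g s y))"
    by (simp add: sum_distrib_left sum_distrib_right right_diff_distrib sum_subtractf mult_ac)
  also have "\<dots> = (\<Sum>y\<in>labels Y. ?P * (1 - ?p y) * g s y)"
    using assms s by (simp add: sum_predictive sum_distrib_left right_diff_distrib left_diff_distrib
      sum_subtractf mult_ac)
  also have "\<dots> = (\<Sum>y\<in>labels Y. seq_prob Y \<alpha> (s @ [y]) * ((real Y - 1) * e_opt Y \<alpha> s y * g s y))"
    using assms s by (intro sum.cong) (simp_all add: seq_prob_snoc flip: e_opt_mult_predictive)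
  finally show "(\<Sum>y\<in>labels Y. seq_prob Y \<alpha> (s @ [y]) * (\<Sum>y'\<in>labels Y - {y}. g s y'))
      = (\<Sum>y\<in>labels Y. seq_prob Y \<alpha> (s @ [y]) * ((real Y - 1) * e_opt Y \<alpha> s y * g s y))" .
qed

lemma bayes_expect_e_opt:
  assumes "Y \<ge> 2" "\<alpha> > 0"
  shows "bayes_expect Y \<alpha> l (e_opt Y \<alpha>) = 1"
proof -
  have "card (labels Y - {y}) = Y - 1" if "y \<in> labels Y" for y
    using that by (simp add: labels_def)
  then have "bayes_expect Y \<alpha> l (\<lambda>_ _. real Y - 1) = bayes_expect Y \<alpha> l (\<lambda>s y. \<Sum>y'\<in>labels Y - {y}. 1)"
    using assms(1) by (auto simp: bayes_expect_def intro!: sum.cong)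
  also have "\<dots> = (real Y - 1) * bayes_expect Y \<alpha> l (e_opt Y \<alpha>)"
    unfolding bayes_expect_sum_others[OF assms] by (simp add: bayes_expect_cmult)
  finally show ?thesis
    using assms by (simp add: bayes_expect_const)
qed

lemma bayes_expect_ereal_ereal:
  "bayes_expect_ereal Y \<alpha> l (\<lambda>s y. ereal (g s y)) = ereal (bayes_expect Y \<alpha> l g)"
  by (simp add: bayes_expect_ereal_def bayes_expect_def)

lemma bayes_expect_ereal_le:
  assumes "Y \<ge> 1" "\<alpha> > 0" "\<And>s y. s \<in> seqs Y l \<Longrightarrow> y \<in> labels Y \<Longrightarrow> g s y \<le> ereal (h s y)"
  shows "bayes_expect_ereal Y \<alpha> l g \<le> ereal (bayes_expect Y \<alpha> l h)"
proof -
  have "ereal (seq_prob Y \<alpha> (s @ [y])) * g s y \<le> ereal (seq_prob Y \<alpha> (s @ [y]) * h s y)"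
    if "s \<in> seqs Y l" "y \<in> labels Y" for s y
    using assms that seq_prob_pos[of Y \<alpha> "s @ [y]"]
    by (intro ereal_mult_le_ereal) (auto simp: seqs_def)
  then have "bayes_expect_ereal Y \<alpha> l g
      \<le> (\<Sum>s\<in>seqs Y l. \<Sum>y\<in>labels Y. ereal (seq_prob Y \<alpha> (s @ [y]) * h s y))"
    unfolding bayes_expect_ereal_def by (intro sum_mono) auto
  then show ?thesis
    by (simp add: bayes_expect_def)
qed

lemma bayes_expect_ereal_less:
  assumes "Y \<ge> 1" "\<alpha> > 0" "\<And>s y. s \<in> seqs Y l \<Longrightarrow> y \<in> labels Y \<Longrightarrow> g s y \<le> ereal (h s y)"
    and "s \<in> seqs Y l" "y \<in> labels Y" "g s y < ereal (h s y)"
  shows "bayes_expect_ereal Y \<alpha> l g < ereal (bayes_expect Y \<alpha> l h)"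
proof -
  let ?G = "\<lambda>s y. ereal (seq_prob Y \<alpha> (s @ [y])) * g s y"
  let ?H = "\<lambda>s y. seq_prob Y \<alpha> (s @ [y]) * h s y"
  have le: "?G s y \<le> ereal (?H s y)" if "s \<in> seqs Y l" "y \<in> labels Y" for s y
    using assms(1-3) that seq_prob_pos[of Y \<alpha> "s @ [y]"]
    by (intro ereal_mult_le_ereal) (auto simp: seqs_def)
  have inner_le: "(\<Sum>y\<in>labels Y. ?G s y) \<le> ereal (\<Sum>y\<in>labels Y. ?H s y)" if "s \<in> seqs Y l" for s
    using le[OF that] sum_mono[of "labels Y" "?G s" "\<lambda>y. ereal (?H s y)"] by simp
  have "?G s y < ereal (?H s y)"
    using assms seq_prob_pos[of Y \<alpha> "s @ [y]"]
    by (intro ereal_mult_less_ereal) (auto simp: seqs_def)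
  then have inner_less: "(\<Sum>y\<in>labels Y. ?G s y) < ereal (\<Sum>y\<in>labels Y. ?H s y)"
    using assms(4,5) le by (intro sum_less_sum_ereal) (simp_all add: labels_def)
  show ?thesis
    unfolding bayes_expect_ereal_def bayes_expect_def
    by (rule sum_less_sum_ereal[where f = "\<lambda>s. \<Sum>y\<in>labels Y. ?G s y" and g = "\<lambda>s. \<Sum>y\<in>labels Y. ?H s y",
      OF finite_seqs inner_le assms(4) inner_less])
qed

lemma objective_eq_bayes_expect_ln:
  assumes "\<And>s y. s \<in> seqs Y l \<Longrightarrow> y \<in> labels Y \<Longrightarrow> f s y > 0"
  shows "objective Y \<alpha> l f = ereal (bayes_expect Y \<alpha> l (\<lambda>s y. \<Sum>y'\<in>labels Y - {y}. ln (f s y')))"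
proof -
  have "(\<Sum>y'\<in>labels Y - {y}. lnE (f s y')) = ereal (\<Sum>y'\<in>labels Y - {y}. ln (f s y'))"
    if "s \<in> seqs Y l" for s y
    using assms[OF that] by (simp add: lnE_def)
  then have "objective Y \<alpha> l f
      = bayes_expect_ereal Y \<alpha> l (\<lambda>s y. ereal (\<Sum>y'\<in>labels Y - {y}. ln (f s y')))"
    unfolding objective_def bayes_expect_ereal_def by (simp cong: sum.cong)
  then show ?thesis
    by (simp add: bayes_expect_ereal_ereal)
qed

lemma objective_le_ln_tangent:
  assumes "Y \<ge> 1" "\<alpha> > 0"
    and "\<And>s y. s \<in> seqs Y l \<Longrightarrow> y \<in> labels Y \<Longrightarrow> f s y \<ge> 0"
    and "\<And>s y. s \<in> seqs Y l \<Longrightarrow> y \<in> labels Y \<Longrightarrow> c s y > 0"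
  shows "objective Y \<alpha> l f
    \<le> ereal (bayes_expect Y \<alpha> l (\<lambda>s y. \<Sum>y'\<in>labels Y - {y}. ln_tangent (c s y') (f s y')))"
  unfolding objective_def using assms
  by (intro bayes_expect_ereal_le sum_lnE_le_ln_tangent) auto

lemma objective_less_ln_tangent:
  assumes "Y \<ge> 2" "\<alpha> > 0"
    and "\<And>s y. s \<in> seqs Y l \<Longrightarrow> y \<in> labels Y \<Longrightarrow> f s y \<ge> 0"
    and "\<And>s y. s \<in> seqs Y l \<Longrightarrow> y \<in> labels Y \<Longrightarrow> c s y > 0"
    and "s \<in> seqs Y l" "y' \<in> labels Y" "f s y' \<noteq> c s y'"
  shows "objective Y \<alpha> l f
    < ereal (bayes_expect Y \<alpha> l (\<lambda>s y. \<Sum>y'\<in>labels Y - {y}. ln_tangent (c s y') (f s y')))"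
proof -
  define y where "y = (if y' = 1 then 2 else 1 :: nat)"
  have y: "y \<in> labels Y" "y' \<in> labels Y - {y}"
    using assms(1,6) by (auto simp: y_def labels_def)
  show ?thesis
    unfolding objective_def using assms(1-5,7) y
    by (intro bayes_expect_ereal_less[where s = s and y = y] sum_lnE_le_ln_tangent
        sum_lnE_less_ln_tangent[where b = y']) (auto simp: labels_def)
qed

lemma bayes_expect_ln_tangent_e_opt:
  assumes "Y \<ge> 2" "\<alpha> > 0"
  shows "bayes_expect Y \<alpha> l (\<lambda>s y. \<Sum>y'\<in>labels Y - {y}. ln_tangent (e_opt Y \<alpha> s y') (f s y'))
    = bayes_expect Y \<alpha> l (\<lambda>s y. \<Sum>y'\<in>labels Y - {y}. ln (e_opt Y \<alpha> s y'))
      + (real Y - 1) * (bayes_expect Y \<alpha> l f - 1)"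
proof -
  have "(real Y - 1) * e_opt Y \<alpha> s y * ((f s y - e_opt Y \<alpha> s y) / e_opt Y \<alpha> s y)
      = (real Y - 1) * (f s y - e_opt Y \<alpha> s y)" for s y
    using e_opt_pos[OF assms, of s y] by simp
  then have "bayes_expect Y \<alpha> l (\<lambda>s y. \<Sum>y'\<in>labels Y - {y}. (f s y' - e_opt Y \<alpha> s y') / e_opt Y \<alpha> s y')
      = (real Y - 1) * (bayes_expect Y \<alpha> l f - 1)"
    using assms by (simp add: bayes_expect_sum_others bayes_expect_cmult bayes_expect_diff bayes_expect_e_opt)
  then show ?thesis
    by (simp add: ln_tangent_def sum.distrib bayes_expect_add)
qed

theorem proposition3:
  fixes Y l :: nat and \<alpha> :: real
  assumes "Y \<ge> 2" and "\<alpha> > 0"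
  shows "valid_evar Y \<alpha> l (e_opt Y \<alpha>)
    \<and> (\<forall>f. valid_evar Y \<alpha> l f \<longrightarrow> objective Y \<alpha> l f \<le> objective Y \<alpha> l (e_opt Y \<alpha>))
    \<and> (\<forall>f. valid_evar Y \<alpha> l f \<and> objective Y \<alpha> l f = objective Y \<alpha> l (e_opt Y \<alpha>) \<longrightarrow>
          (\<forall>ys\<in>seqs Y l. \<forall>y'\<in>labels Y. f ys y' = e_opt Y \<alpha> ys y'))"
proof -
  let ?e = "e_opt Y \<alpha>"
  let ?T = "\<lambda>f. bayes_expect Y \<alpha> l (\<lambda>s y. \<Sum>y'\<in>labels Y - {y}. ln_tangent (?e s y') (f s y'))"
  have e_pos: "?e s y > 0" for s y
    using e_opt_pos[OF assms] .
  have tangent_le: "ereal (?T f) \<le> objective Y \<alpha> l ?e" if "valid_evar Y \<alpha> l f" for f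
    using that assms e_pos
    by (simp add: objective_eq_bayes_expect_ln bayes_expect_ln_tangent_e_opt valid_evar_def mult_nonneg_nonpos)
  have "valid_evar Y \<alpha> l ?e"
    using assms e_pos by (simp add: valid_evar_def bayes_expect_e_opt less_imp_le)
  moreover have "objective Y \<alpha> l f \<le> objective Y \<alpha> l ?e" if "valid_evar Y \<alpha> l f" for f
    using objective_le_ln_tangent[of Y \<alpha> l f ?e] assms e_pos that tangent_le[OF that]
    by (force simp: valid_evar_def)
  moreover have "f s y' = ?e s y'"
    if "valid_evar Y \<alpha> l f" "objective Y \<alpha> l f = objective Y \<alpha> l ?e" "s \<in> seqs Y l" "y' \<in> labels Y"
    for f s y'
  proof (rule ccontr)
    assume "f s y' \<noteq> ?e s y'"
    then have "objective Y \<alpha> l f < ereal (?T f)"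
      using objective_less_ln_tangent[of Y \<alpha> l f ?e s y'] assms e_pos that by (simp add: valid_evar_def)
    also have "\<dots> \<le> objective Y \<alpha> l ?e"
      using tangent_le[OF that(1)] .
    finally show False
      using that(2) by simp
  qed
  ultimately show ?thesis
    by blast
qed

end
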